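(* A functional $\Lambda$-system algebra over a set $\mathcal{X}$ that has consistently chosen fixed points is composition-order invariant if and only if it is connection-order invariant.
   Context: Let $\Lambda,\mathcal{X}$ be sets. For finite disjoint $\mathcal{I},\mathcal{O}\subseteq\Lambda$ let $\mathfrak{S}_{\mathcal{I},\mathcal{O}}$ be a set of functions $s:\mathcal{X}^{\mathcal{I}}\to\mathcal{X}^{\mathcal{O}}$ ($\mathcal{X}^{\mathcal{I}}$ = functions $\mathcal{I}\to\mathcal{X}$) and $\mathfrak{S}$ their union. For $s\in\mathfrak{S}_{\mathcal{I},\mathcal{O}}$, $i\in\mathcal{I}$, $o\in\mathcal{O}$, $\mathbf{x}\in\mathcal{X}^{\mathcal{I}\setminus\{i\}}$ let $\mathrm{Fix}(s,i,o,\mathbf{x}):=\{x_i\in\mathcal{X}\mid s(\mathbf{x}\cup\{(i,x_i)\})(o)=x_i\}$. Let $\Gamma$ assign to each $s\in\mathfrak{S}_{\mathcal{I},\mathcal{O}}$ a set of unordered pairs $\{i,o\}$, $i\in\mathcal{I}$, $o\in\mathcal{O}$, with $\mathrm{Fix}(s,i,o,\mathbf{x})\neq\emptyset$ for all $\mathbf{x}$, and let $\phi$ be a family of functions $\phi^s_{i,o}:\mathcal{X}^{\mathcal{I}\setminus\{i\}}\to\mathcal{X}$ with $\phi^s_{i,o}(\mathbf{x})\in\mathrm{Fix}(s,i,o,\mathbf{x})$. Define $\lambda(s)=\mathcal{I}\cup\mathcal{O}$; $s_1\parallel s_2$ (for $s_j\in\mathfrak{S}_{\mathcal{I}_j,\mathcal{O}_j}$,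 all four sets pairwise disjoint) by $(s_1\parallel s_2)(\mathbf{x})(o_j)=s_j(\mathbf{x}|_{\mathcal{I}_j})(o_j)$; and $\gamma_{i,o}(s)(\mathbf{x})=s(\mathbf{x}\cup\{(i,\phi^s_{i,o}(\mathbf{x}))\})|_{\mathcal{O}\setminus\{o\}}$ for $\{i,o\}\in\Gamma(s)$. If $\mathfrak{S}$ is closed under $\parallel,\gamma$ and $\{i,o\}\in\Gamma(s_1\parallel s_2)\iff\{i,o\}\in\Gamma(s_j)$ for $i,o\in\lambda(s_j)$, the resulting $(\mathfrak{S},\lambda,\parallel,\Gamma,\gamma)$ is a functional $\Lambda$-system algebra over $\mathcal{X}$. It has consistently chosen fixed points if there exists such a family $\phi$ producing the same $(\mathfrak{S},\lambda,\parallel,\Gamma,\gamma)$ such that for all $s\in\mathfrak{S}_{\mathcal{I},\mathcal{O}}$, $s'\in\mathfrak{S}_{\mathcal{I}',\mathcal{O}'}$, $\{i,o\}\in\Gamma(s)\cap\Gamma(s')$, $\mathbf{x}\in\mathcal{X}^{\mathcal{I}\setminus\{i\}}$, $\mathbf{x}'\in\mathcal{X}^{\mathcal{I}'\setminus\{i\}}$: $\mathrm{Fix}(s,i,o,\mathbf{x})=\mathrm{Fix}(s',i,o,\mathbf{x}')$ implies $\phi^s_{i,o}(\mathbf{x})=\phi^{s'}_{i,o}(\mathbf{x}')$. $\Gamma$ permits reordering if for all $s$, $\{i,o\}\in\Gamma(s)$, $\{i',o'\}\in\Gamma(\gamma_{i,o}(s))$ we have $\{i',o'\}\in\Gamma(s)$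 and $\{i,o\}\in\Gamma(\gamma_{i',o'}(s))$; connection-order invariance means additionally $\gamma_{i',o'}(\gamma_{i,o}(s))=\gamma_{i,o}(\gamma_{i',o'}(s))$. Composition-order invariance means connection-order invariance, $\parallel$ associative and commutative, and $\gamma_{i,o}(s_1)\parallel s_2=\gamma_{i,o}(s_1\parallel s_2)$ whenever $\lambda(s_1)\cap\lambda(s_2)=\emptyset$ and $\{i,o\}\in\Gamma(s_1)$. *)

theory Defs
  imports Main
begin

text \<open>Labels \<Lambda> are the elements of the type 'l, values \<X> the elements of the type 'x.  An element of \<X>^I is a partial
  map with domain exactly I.  The function is required to map \<X>^I into \<X>^O and to be
  canonical (Map.empty) outside \<X>^I, so that it represents exactly a function \<X>^I \<rightarrow> \<X>^O.\<close>

type_synonym ('l, 'x) sys = "'l set \<times> 'l set \<times> (('l \<rightharpoonup> 'x) \<Rightarrow> ('l \<rightharpoonup> 'x))"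

definition ins :: "('l, 'x) sys \<Rightarrow> 'l set" where "ins s = fst s"
definition outs :: "('l, 'x) sys \<Rightarrow> 'l set" where "outs s = fst (snd s)"
definition fn :: "('l, 'x) sys \<Rightarrow> ('l \<rightharpoonup> 'x) \<Rightarrow> ('l \<rightharpoonup> 'x)" where "fn s = snd (snd s)"

definition lab :: "('l, 'x) sys \<Rightarrow> 'l set" where "lab s = ins s \<union> outs s"

definition wf_sys :: "('l, 'x) sys \<Rightarrow> bool" where
  "wf_sys s \<longleftrightarrow> finite (ins s) \<and> finite (outs s) \<and> ins s \<inter> outs s = {} \<and>
     (\<forall>x. dom x = ins s \<longrightarrow> dom (fn s x) = outs s) \<and>
     (\<forall>x. dom x \<noteq> ins s \<longrightarrow> fn s x = Map.empty)"

definition Fix :: "('l, 'x) sys \<Rightarrow> 'l \<Rightarrow> 'l \<Rightarrow> ('l \<rightharpoonup> 'x) \<Rightarrow> 'x set" where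
  "Fix s i ou x = {v. fn s (x(i \<mapsto> v)) ou = Some v}"

definition par :: "('l, 'x) sys \<Rightarrow> ('l, 'x) sys \<Rightarrow> ('l, 'x) sys" where
  "par s1 s2 = (ins s1 \<union> ins s2, outs s1 \<union> outs s2,
     \<lambda>x. if dom x = ins s1 \<union> ins s2
         then fn s1 (x |` ins s1) ++ fn s2 (x |` ins s2) else Map.empty)"

type_synonym ('l, 'x) fpsel = "('l, 'x) sys \<Rightarrow> 'l \<Rightarrow> 'l \<Rightarrow> ('l \<rightharpoonup> 'x) \<Rightarrow> 'x"

definition conn :: "('l, 'x) fpsel \<Rightarrow> 'l \<Rightarrow> 'l \<Rightarrow> ('l, 'x) sys \<Rightarrow> ('l, 'x) sys" where
  "conn \<phi> i ou s = (ins s - {i}, outs s - {ou},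
     \<lambda>x. if dom x = ins s - {i}
         then fn s (x(i \<mapsto> \<phi> s i ou x)) |` (outs s - {ou}) else Map.empty)"

text \<open>\<Gamma>(s) is represented as a set of ordered pairs (i,ou) with i an input and ou an output of s;
  since inputs and outputs of s are disjoint this is the same as the unordered pair {i,o}.\<close>
definition valid_fp :: "('l, 'x) sys set \<Rightarrow> (('l, 'x) sys \<Rightarrow> ('l \<times> 'l) set) \<Rightarrow> ('l, 'x) fpsel \<Rightarrow> bool" where
  "valid_fp S \<Gamma> \<phi> \<longleftrightarrow> (\<forall>s\<in>S. \<forall>(i, ou)\<in>\<Gamma> s. \<forall>x. dom x = ins s - {i} \<longrightarrow> \<phi> s i ou x \<in> Fix s i ou x)"

definition functional_system_algebra ::
  "('l, 'x) sys set \<Rightarrow> (('l, 'x) sys \<Rightarrow> ('l \<times> 'l) set) \<Rightarrow> ('l, 'x) fpsel \<Rightarrow> bool" where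
  "functional_system_algebra S \<Gamma> \<phi> \<longleftrightarrow>
     (\<forall>s\<in>S. wf_sys s) \<and>
     (\<forall>s\<in>S. \<Gamma> s \<subseteq> ins s \<times> outs s) \<and>
     (\<forall>s\<in>S. \<forall>(i, ou)\<in>\<Gamma> s. \<forall>x. dom x = ins s - {i} \<longrightarrow> Fix s i ou x \<noteq> {}) \<and>
     valid_fp S \<Gamma> \<phi> \<and>
     (\<forall>s1\<in>S. \<forall>s2\<in>S. lab s1 \<inter> lab s2 = {} \<longrightarrow> par s1 s2 \<in> S) \<and>
     (\<forall>s\<in>S. \<forall>(i, ou)\<in>\<Gamma> s. conn \<phi> i ou s \<in> S) \<and>
     (\<forall>s1\<in>S. \<forall>s2\<in>S. lab s1 \<inter> lab s2 = {} \<longrightarrow>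
        (\<forall>i ou. i \<in> lab s1 \<and> ou \<in> lab s1 \<longrightarrow> ((i, ou) \<in> \<Gamma> (par s1 s2) \<longleftrightarrow> (i, ou) \<in> \<Gamma> s1)) \<and>
        (\<forall>i ou. i \<in> lab s2 \<and> ou \<in> lab s2 \<longrightarrow> ((i, ou) \<in> \<Gamma> (par s1 s2) \<longleftrightarrow> (i, ou) \<in> \<Gamma> s2)))"

definition consistent_fp :: "('l, 'x) sys set \<Rightarrow> (('l, 'x) sys \<Rightarrow> ('l \<times> 'l) set) \<Rightarrow> ('l, 'x) fpsel \<Rightarrow> bool" where
  "consistent_fp S \<Gamma> \<phi> \<longleftrightarrow>
     (\<forall>s\<in>S. \<forall>s'\<in>S. \<forall>i ou. (i, ou) \<in> \<Gamma> s \<and> (i, ou) \<in> \<Gamma> s' \<longrightarrow>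
        (\<forall>x x'. dom x = ins s - {i} \<and> dom x' = ins s' - {i} \<and> Fix s i ou x = Fix s' i ou x'
            \<longrightarrow> \<phi> s i ou x = \<phi> s' i ou x'))"

text \<open>Consistently chosen fixed points: some selection \<phi>' yields the same algebra
  (same \<gamma>; \<lambda>, ||, \<Gamma> do not depend on \<phi>) and is consistent.\<close>
definition has_consistent_fp :: "('l, 'x) sys set \<Rightarrow> (('l, 'x) sys \<Rightarrow> ('l \<times> 'l) set) \<Rightarrow> ('l, 'x) fpsel \<Rightarrow> bool" where
  "has_consistent_fp S \<Gamma> \<phi> \<longleftrightarrow>
     (\<exists>\<phi>'. valid_fp S \<Gamma> \<phi>' \<and> (\<forall>s\<in>S. \<forall>(i, ou)\<in>\<Gamma> s. conn \<phi>' i ou s = conn \<phi> i ou s) \<and>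
          consistent_fp S \<Gamma> \<phi>')"

definition permits_reordering ::
  "('l, 'x) sys set \<Rightarrow> (('l, 'x) sys \<Rightarrow> ('l \<times> 'l) set) \<Rightarrow> ('l \<Rightarrow> 'l \<Rightarrow> ('l, 'x) sys \<Rightarrow> ('l, 'x) sys) \<Rightarrow> bool" where
  "permits_reordering S \<Gamma> \<gamma> \<longleftrightarrow>
     (\<forall>s\<in>S. \<forall>(i, ou)\<in>\<Gamma> s. \<forall>(i', ou')\<in>\<Gamma> (\<gamma> i ou s). (i', ou') \<in> \<Gamma> s \<and> (i, ou) \<in> \<Gamma> (\<gamma> i' ou' s))"

definition connection_order_invariant ::
  "('l, 'x) sys set \<Rightarrow> (('l, 'x) sys \<Rightarrow> ('l \<times> 'l) set) \<Rightarrow> ('l \<Rightarrow> 'l \<Rightarrow> ('l, 'x) sys \<Rightarrow> ('l, 'x) sys) \<Rightarrow> bool" where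
  "connection_order_invariant S \<Gamma> \<gamma> \<longleftrightarrow>
     permits_reordering S \<Gamma> \<gamma> \<and>
     (\<forall>s\<in>S. \<forall>(i, ou)\<in>\<Gamma> s. \<forall>(i', ou')\<in>\<Gamma> (\<gamma> i ou s). \<gamma> i' ou' (\<gamma> i ou s) = \<gamma> i ou (\<gamma> i' ou' s))"

definition composition_order_invariant ::
  "('l, 'x) sys set \<Rightarrow> (('l, 'x) sys \<Rightarrow> ('l \<times> 'l) set) \<Rightarrow> ('l \<Rightarrow> 'l \<Rightarrow> ('l, 'x) sys \<Rightarrow> ('l, 'x) sys) \<Rightarrow> bool" where
  "composition_order_invariant S \<Gamma> \<gamma> \<longleftrightarrow>
     connection_order_invariant S \<Gamma> \<gamma> \<and>
     (\<forall>s1\<in>S. \<forall>s2\<in>S. \<forall>s3\<in>S. lab s1 \<inter> lab s2 = {} \<and> lab s1 \<inter> lab s3 = {} \<and> lab s2 \<inter> lab s3 = {}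
        \<longrightarrow> par (par s1 s2) s3 = par s1 (par s2 s3)) \<and>
     (\<forall>s1\<in>S. \<forall>s2\<in>S. lab s1 \<inter> lab s2 = {} \<longrightarrow> par s1 s2 = par s2 s1) \<and>
     (\<forall>s1\<in>S. \<forall>s2\<in>S. lab s1 \<inter> lab s2 = {} \<longrightarrow>
        (\<forall>(i, ou)\<in>\<Gamma> s1. par (\<gamma> i ou s1) s2 = \<gamma> i ou (par s1 s2)))"

end

theory Submission
  imports Defs
begin

text \<open>Connection-order invariance is part of composition-order invariance, and associativity
  and commutativity of parallel composition hold for disjoint systems outright.  The only
  real content is \<open>\<gamma>\<^sub>i\<^sub>,\<^sub>o(s\<^sub>1) \<parallel> s\<^sub>2 = \<gamma>\<^sub>i\<^sub>,\<^sub>o(s\<^sub>1 \<parallel> s\<^sub>2)\<close>.  Both sides feed back the same output into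
  the same input; since \<open>s\<^sub>2\<close> does not touch \<open>o\<close>, the fixed-point sets of \<open>s\<^sub>1 \<parallel> s\<^sub>2\<close> and of \<open>s\<^sub>1\<close>
  coincide, so a consistent selection picks the same fixed point on both sides.  Replacing the
  given selection by a consistent one does not change the connections.\<close>

lemma sys_sel [simp]: "ins (a, b, c) = a" "outs (a, b, c) = b" "fn (a, b, c) = c"
  by (simp_all add: ins_def outs_def fn_def)

lemma sys_eqI: "ins s = ins t \<Longrightarrow> outs s = outs t \<Longrightarrow> fn s = fn t \<Longrightarrow> s = t"
  by (simp add: ins_def outs_def fn_def prod_eq_iff)

lemma wf_sys_dom_fn: "wf_sys s \<Longrightarrow> dom x = ins s \<Longrightarrow> dom (fn s x) = outs s"
  by (simp add: wf_sys_def)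

lemma ins_par [simp]: "ins (par s1 s2) = ins s1 \<union> ins s2"
  and outs_par [simp]: "outs (par s1 s2) = outs s1 \<union> outs s2"
  by (simp_all add: par_def)

lemma fn_par: "fn (par s1 s2) x = (if dom x = ins s1 \<union> ins s2
    then fn s1 (x |` ins s1) ++ fn s2 (x |` ins s2) else Map.empty)"
  by (simp add: par_def)

lemma par_assoc: "par (par s1 s2) s3 = par s1 (par s2 s3)"
proof (rule sys_eqI)
  show "fn (par (par s1 s2) s3) = fn (par s1 (par s2 s3))"
  proof
    fix x
    show "fn (par (par s1 s2) s3) x = fn (par s1 (par s2 s3)) x"
    proof (cases "dom x = ins s1 \<union> ins s2 \<union> ins s3")
      case True
      then have "dom (x |` (ins s1 \<union> ins s2)) = ins s1 \<union> ins s2"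
        and "dom (x |` (ins s2 \<union> ins s3)) = ins s2 \<union> ins s3" by auto
      with True show ?thesis
        by (simp add: fn_par Un_assoc restrict_restrict Int_absorb2)
    qed (simp add: fn_par Un_assoc)
  qed
qed (simp_all add: Un_assoc)

lemma par_comm:
  assumes "wf_sys s1" "wf_sys s2" "lab s1 \<inter> lab s2 = {}"
  shows "par s1 s2 = par s2 s1"
proof (rule sys_eqI)
  show "fn (par s1 s2) = fn (par s2 s1)"
  proof
    fix x
    show "fn (par s1 s2) x = fn (par s2 s1) x"
    proof (cases "dom x = ins s1 \<union> ins s2")
      case True
      then have "dom (fn s1 (x |` ins s1)) = outs s1" "dom (fn s2 (x |` ins s2)) = outs s2"
        using assms(1,2) by (simp_all add: wf_sys_dom_fn)
      moreover have "outs s1 \<inter> outs s2 = {}" using assms(3) by (auto simp: lab_def)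
      ultimately show ?thesis
        using True by (simp add: fn_par Un_commute map_add_comm[of "fn s1 (x |` ins s1)"])
    qed (simp add: fn_par Un_commute)
  qed
qed (simp_all add: Un_commute)

lemma ins_conn [simp]: "ins (conn \<psi> i ou s) = ins s - {i}"
  and outs_conn [simp]: "outs (conn \<psi> i ou s) = outs s - {ou}"
  by (simp_all add: conn_def)

lemma fn_conn: "fn (conn \<psi> i ou s) x = (if dom x = ins s - {i}
    then fn s (x(i \<mapsto> \<psi> s i ou x)) |` (outs s - {ou}) else Map.empty)"
  by (simp add: conn_def)

lemma restrict_map_add_left:
  assumes "dom f = A" "dom g = B" "A \<inter> B = {}" "ou \<notin> B"
  shows "f |` (A - {ou}) ++ g = (f ++ g) |` (A \<union> B - {ou})"
proof
  fix l
  show "(f |` (A - {ou}) ++ g) l = ((f ++ g) |` (A \<union> B - {ou})) l"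
    using assms by (cases "l \<in> B"; cases "l \<in> A";
        auto simp: map_add_def restrict_map_def split: option.splits)
qed

lemma par_conn:
  assumes wf1: "wf_sys s1" and wf2: "wf_sys s2" and disj: "lab s1 \<inter> lab s2 = {}"
    and io: "i \<in> ins s1" "ou \<in> outs s1"
    and sel: "\<And>x. dom x = ins s1 \<union> ins s2 - {i} \<Longrightarrow>
               \<psi> (par s1 s2) i ou x = \<psi> s1 i ou (x |` (ins s1 - {i}))"
  shows "par (conn \<psi> i ou s1) s2 = conn \<psi> i ou (par s1 s2)"
proof -
  have notin2: "i \<notin> ins s2" "ou \<notin> outs s2" using disj io by (auto simp: lab_def)
  have ins_eq: "ins s1 - {i} \<union> ins s2 = ins s1 \<union> ins s2 - {i}" using notin2 by auto
  have outs_disj: "outs s1 \<inter> outs s2 = {}" using disj by (auto simp: lab_def)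
  have "fn (par (conn \<psi> i ou s1) s2) x = fn (conn \<psi> i ou (par s1 s2)) x" for x
  proof (cases "dom x = ins s1 \<union> ins s2 - {i}")
    case True
    define y where "y = x |` (ins s1 - {i})"
    define v where "v = \<psi> s1 i ou y"
    have dom_y: "dom y = ins s1 - {i}" using True by (auto simp: y_def)
    then have "dom (y(i \<mapsto> v)) = ins s1" using io by auto
    with wf1 have dom1: "dom (fn s1 (y(i \<mapsto> v))) = outs s1" by (rule wf_sys_dom_fn)
    have "dom (x |` ins s2) = ins s2" using True notin2 by auto
    with wf2 have dom2: "dom (fn s2 (x |` ins s2)) = outs s2" by (rule wf_sys_dom_fn)
    have "x(i \<mapsto> v) |` ins s1 = y(i \<mapsto> v)"
      using io by (auto simp: y_def restrict_map_def fun_eq_iff)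
    moreover have "x(i \<mapsto> v) |` ins s2 = x |` ins s2"
      using notin2 by (auto simp: restrict_map_def fun_eq_iff)
    moreover have "dom (x(i \<mapsto> v)) = ins s1 \<union> ins s2" using True io by auto
    ultimately have "fn (par s1 s2) (x(i \<mapsto> v)) = fn s1 (y(i \<mapsto> v)) ++ fn s2 (x |` ins s2)"
      by (simp add: fn_par)
    moreover have "\<psi> (par s1 s2) i ou x = v" using sel[OF True] by (simp add: v_def y_def)
    ultimately have "fn (conn \<psi> i ou (par s1 s2)) x
        = (fn s1 (y(i \<mapsto> v)) ++ fn s2 (x |` ins s2)) |` (outs s1 \<union> outs s2 - {ou})"
      using True by (simp add: fn_conn)
    also have "\<dots> = fn s1 (y(i \<mapsto> v)) |` (outs s1 - {ou}) ++ fn s2 (x |` ins s2)"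
      using restrict_map_add_left[OF dom1 dom2 outs_disj notin2(2)] by simp
    also have "\<dots> = fn (par (conn \<psi> i ou s1) s2) x"
      using True ins_eq dom_y by (simp add: fn_par fn_conn v_def y_def[symmetric])
    finally show ?thesis ..
  qed (simp add: fn_par fn_conn ins_eq)
  then show ?thesis
    using ins_eq notin2 by (intro sys_eqI) auto
qed

lemma Fix_par:
  assumes wf2: "wf_sys s2" and "i \<in> ins s1" "ou \<notin> outs s2"
    and dx: "dom x = ins s1 \<union> ins s2 - {i}"
  shows "Fix (par s1 s2) i ou x = Fix s1 i ou (x |` (ins s1 - {i}))"
proof -
  have "fn (par s1 s2) (x(i \<mapsto> v)) ou = fn s1 ((x |` (ins s1 - {i}))(i \<mapsto> v)) ou" for v
  proof -
    have dom_xv: "dom (x(i \<mapsto> v)) = ins s1 \<union> ins s2" using dx assms(2) by auto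
    then have "dom (x(i \<mapsto> v) |` ins s2) = ins s2" by auto
    with wf2 have "dom (fn s2 (x(i \<mapsto> v) |` ins s2)) = outs s2" by (rule wf_sys_dom_fn)
    then have "fn s2 (x(i \<mapsto> v) |` ins s2) ou = None" using assms(3) by auto
    moreover have "x(i \<mapsto> v) |` ins s1 = (x |` (ins s1 - {i}))(i \<mapsto> v)"
      using assms(2) by (auto simp: restrict_map_def fun_eq_iff)
    ultimately show ?thesis using dom_xv by (simp add: fn_par map_add_def)
  qed
  then show ?thesis by (simp add: Fix_def)
qed

lemma fsa_wf_sys: "functional_system_algebra S \<Gamma> \<phi> \<Longrightarrow> s \<in> S \<Longrightarrow> wf_sys s"
  by (simp add: functional_system_algebra_def)

lemma fsa_Gamma_subset: "functional_system_algebra S \<Gamma> \<phi> \<Longrightarrow> s \<in> S \<Longrightarrow> (i, ou) \<in> \<Gamma> s \<Longrightarrow>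
    i \<in> ins s \<and> ou \<in> outs s"
  unfolding functional_system_algebra_def by (elim conjE) blast

lemma fsa_par_closed: "functional_system_algebra S \<Gamma> \<phi> \<Longrightarrow> s1 \<in> S \<Longrightarrow> s2 \<in> S \<Longrightarrow>
    lab s1 \<inter> lab s2 = {} \<Longrightarrow> par s1 s2 \<in> S"
  by (simp add: functional_system_algebra_def)

lemma fsa_Gamma_par:
  assumes "functional_system_algebra S \<Gamma> \<phi>"
    and "s1 \<in> S" "s2 \<in> S" "lab s1 \<inter> lab s2 = {}" "(i, ou) \<in> \<Gamma> s1"
  shows "(i, ou) \<in> \<Gamma> (par s1 s2)"
proof -
  have "i \<in> lab s1" "ou \<in> lab s1"
    using fsa_Gamma_subset[OF assms(1,2,5)] by (auto simp: lab_def)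
  moreover have "\<forall>s1\<in>S. \<forall>s2\<in>S. lab s1 \<inter> lab s2 = {} \<longrightarrow>
      (\<forall>i ou. i \<in> lab s1 \<and> ou \<in> lab s1 \<longrightarrow> ((i, ou) \<in> \<Gamma> (par s1 s2) \<longleftrightarrow> (i, ou) \<in> \<Gamma> s1)) \<and>
      (\<forall>i ou. i \<in> lab s2 \<and> ou \<in> lab s2 \<longrightarrow> ((i, ou) \<in> \<Gamma> (par s1 s2) \<longleftrightarrow> (i, ou) \<in> \<Gamma> s2))"
    using assms(1) unfolding functional_system_algebra_def by (elim conjE) assumption
  ultimately show ?thesis using assms(2-5) by blast
qed

lemma consistent_fpD:
  assumes "consistent_fp S \<Gamma> \<psi>" "s \<in> S" "s' \<in> S" "(i, ou) \<in> \<Gamma> s" "(i, ou) \<in> \<Gamma> s'"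
    "dom x = ins s - {i}" "dom x' = ins s' - {i}" "Fix s i ou x = Fix s' i ou x'"
  shows "\<psi> s i ou x = \<psi> s' i ou x'"
  using assms unfolding consistent_fp_def by blast

lemma fsa_consistent_par_conn:
  assumes fsa: "functional_system_algebra S \<Gamma> \<phi>" and cons: "consistent_fp S \<Gamma> \<psi>"
    and s1: "s1 \<in> S" and s2: "s2 \<in> S" and disj: "lab s1 \<inter> lab s2 = {}"
    and g: "(i, ou) \<in> \<Gamma> s1"
  shows "par (conn \<psi> i ou s1) s2 = conn \<psi> i ou (par s1 s2)"
proof (rule par_conn)
  show "wf_sys s1" and wf2: "wf_sys s2" using fsa s1 s2 by (simp_all add: fsa_wf_sys)
  show io: "i \<in> ins s1" "ou \<in> outs s1" using fsa_Gamma_subset[OF fsa s1 g] by auto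
  show "lab s1 \<inter> lab s2 = {}" by (fact disj)
  show "\<psi> (par s1 s2) i ou x = \<psi> s1 i ou (x |` (ins s1 - {i}))"
    if dx: "dom x = ins s1 \<union> ins s2 - {i}" for x
  proof -
    have "ou \<notin> outs s2" using disj io by (auto simp: lab_def)
    then have same_Fix: "Fix (par s1 s2) i ou x = Fix s1 i ou (x |` (ins s1 - {i}))"
      by (rule Fix_par[OF wf2 io(1) _ dx])
    have dom_x: "dom x = ins (par s1 s2) - {i}" using dx by simp
    have dom_restr: "dom (x |` (ins s1 - {i})) = ins s1 - {i}" using dx by auto
    show ?thesis
      by (rule consistent_fpD[OF cons fsa_par_closed[OF fsa s1 s2 disj] s1
            fsa_Gamma_par[OF fsa s1 s2 disj g] g dom_x dom_restr same_Fix])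
  qed
qed

theorem lemma4p6:
  fixes S :: "('l, 'x) sys set"
    and \<Gamma> :: "('l, 'x) sys \<Rightarrow> ('l \<times> 'l) set"
    and \<phi> :: "('l, 'x) fpsel"
  assumes "functional_system_algebra S \<Gamma> \<phi>"
    and "has_consistent_fp S \<Gamma> \<phi>"
  shows "composition_order_invariant S \<Gamma> (conn \<phi>) \<longleftrightarrow> connection_order_invariant S \<Gamma> (conn \<phi>)"
proof
  assume coi: "connection_order_invariant S \<Gamma> (conn \<phi>)"
  obtain \<phi>' where same_conn_all: "\<forall>s\<in>S. \<forall>(i, ou)\<in>\<Gamma> s. conn \<phi>' i ou s = conn \<phi> i ou s"
    and cons: "consistent_fp S \<Gamma> \<phi>'"
    using assms(2) unfolding has_consistent_fp_def by blast
  have same_conn: "conn \<phi>' i ou s = conn \<phi> i ou s" if "s \<in> S" "(i, ou) \<in> \<Gamma> s" for s i ou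
    using same_conn_all that by fastforce
  have "par (conn \<phi> i ou s1) s2 = conn \<phi> i ou (par s1 s2)"
    if "s1 \<in> S" "s2 \<in> S" "lab s1 \<inter> lab s2 = {}" "(i, ou) \<in> \<Gamma> s1" for s1 s2 i ou
  proof -
    have "par s1 s2 \<in> S" "(i, ou) \<in> \<Gamma> (par s1 s2)"
      using fsa_par_closed[OF assms(1) that(1-3)] fsa_Gamma_par[OF assms(1) that] by simp_all
    then show ?thesis
      using fsa_consistent_par_conn[OF assms(1) cons that] same_conn[OF that(1,4)]
        same_conn[of "par s1 s2"] by simp
  qed
  then show "composition_order_invariant S \<Gamma> (conn \<phi>)"
    unfolding composition_order_invariant_def
    using coi par_assoc par_comm fsa_wf_sys[OF assms(1)] by blast
qed (simp add: composition_order_invariant_def)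

end
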